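(* Let $f$ be an analytic function on $\mathbb{D}=\{z\in\mathbb{C}:|z|<1\}$ with $f(0)=0$, $f'(0)=1$ and $f(z)\neq 0$ for $0<|z|<1$. Let $LU_f=\{c\in\mathbb{C}: K_c[f]\text{ is locally univalent on }\mathbb{D}\}$. Then $1$ is an interior point of $LU_f$ if and only if $f(z)/(zf'(z))$ is bounded on $\mathbb{D}$.
   Context: Let $\operatorname{Log}(f(z)/z)$ denote the branch of $\log(f(z)/z)$ on $\mathbb{D}$ vanishing at $z=0$, and for $c\in\mathbb{C}$ set $K_c[f](z)=z\exp\big(c\operatorname{Log}(f(z)/z)\big)$. An analytic function $g$ is locally univalent on $\mathbb{D}$ if $g'(z)\ne 0$ for all $z\in\mathbb{D}$. *)

theory Defs
  imports "HOL-Complex_Analysis.Complex_Analysis"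
begin

text \<open>The branch Log(f(z)/z) on the unit disc vanishing at 0: a holomorphic g on the
disc with g 0 = 0 and exp (g z) = f z / z for z \<noteq> 0 (unique when it exists).\<close>
definition Log_quot :: "(complex \<Rightarrow> complex) \<Rightarrow> complex \<Rightarrow> complex" where
  "Log_quot f = (SOME g. g holomorphic_on ball 0 1 \<and> g 0 = 0 \<and>
                    (\<forall>z\<in>ball 0 1 - {0}. exp (g z) = f z / z))"

definition K_op :: "complex \<Rightarrow> (complex \<Rightarrow> complex) \<Rightarrow> complex \<Rightarrow> complex" where
  "K_op c f = (\<lambda>z. z * exp (c * Log_quot f z))"

definition locally_univalent :: "(complex \<Rightarrow> complex) \<Rightarrow> complex set \<Rightarrow> bool" where
  "locally_univalent g S \<longleftrightarrow> g holomorphic_on S \<and> (\<forall>z\<in>S. deriv g z \<noteq> 0)"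

definition LU :: "(complex \<Rightarrow> complex) \<Rightarrow> complex set" where
  "LU f = {c. locally_univalent (K_op c f) (ball 0 1)}"

end

theory Submission
  imports Defs
begin

text \<open>Write \<open>g = Log(f(z)/z)\<close> and \<open>w(z) = z g'(z)\<close>. Then \<open>K\<^sub>c[f]' = e\<^sup>c\<^sup>g (1 + c w)\<close>,
  so \<open>LU\<^sub>f = {c. 1 + c w(z) \<noteq> 0 on \<bbbD>}\<close>, while \<open>f = z e\<^sup>g\<close> gives \<open>f/(z f') = 1/(1 + w)\<close>.
  A disc around \<open>c = 1\<close> avoids all the values \<open>-1/w(z)\<close> exactly when \<open>|1 + w|\<close> is bounded
  away from 0, and since \<open>1 + w\<close> is holomorphic and not identically zero, this is the same as
  boundedness of \<open>1/(1 + w)\<close> off the point 0.\<close>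

lemma exists_holomorphic_log_of_quotient:
  assumes hol: "f holomorphic_on S" and "open S" "convex S" "0 \<in> S"
    and f0: "f 0 = 0" and df0: "deriv f 0 = 1"
    and nz: "\<And>z. z \<in> S - {0} \<Longrightarrow> f z \<noteq> 0"
  shows "\<exists>g. g holomorphic_on S \<and> g 0 = 0 \<and> (\<forall>z\<in>S - {0}. exp (g z) = f z / z)"
proof -
  define h where "h = (\<lambda>z. if z = 0 then deriv f 0 else (f z - f 0) / (z - 0))"
  have "h holomorphic_on S"
    unfolding h_def using hol \<open>open S\<close> by (rule pole_lemma_open)
  moreover have "h z \<noteq> 0" if "z \<in> S" for z
    using nz that df0 f0 by (auto simp: h_def)
  ultimately obtain l where l: "l holomorphic_on S" "\<And>z. z \<in> S \<Longrightarrow> h z = exp (l z)"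
    using contractible_imp_holomorphic_log convex_imp_contractible \<open>convex S\<close> by metis
  show ?thesis
  proof (intro exI conjI ballI)
    show "(\<lambda>z. l z - l 0) holomorphic_on S"
      using l(1) by (intro holomorphic_intros)
    fix z assume z: "z \<in> S - {0}"
    have "exp (l z - l 0) = h z / h 0"
      using l(2) z \<open>0 \<in> S\<close> by (simp add: exp_diff)
    also have "\<dots> = f z / z"
      using z df0 f0 by (simp add: h_def)
    finally show "exp (l z - l 0) = f z / z" .
  qed simp
qed

lemma Log_quot_props:
  assumes "f holomorphic_on ball 0 1" "f 0 = 0" "deriv f 0 = 1"
    and "\<And>z. z \<in> ball 0 1 - {0} \<Longrightarrow> f z \<noteq> 0"
  shows "Log_quot f holomorphic_on ball 0 1" "Log_quot f 0 = 0"
    and "\<And>z. z \<in> ball 0 1 - {0} \<Longrightarrow> exp (Log_quot f z) = f z / z"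
  using someI_ex[OF exists_holomorphic_log_of_quotient[OF assms(1) _ _ _ assms(2-4)]]
  by (auto simp: Log_quot_def)

lemma has_field_derivative_mult_exp:
  assumes "g holomorphic_on S" "open S" "z \<in> S"
  shows "((\<lambda>z. z * exp (c * g z)) has_field_derivative
           exp (c * g z) * (1 + c * (z * deriv g z))) (at z)"
  using holomorphic_derivI[OF assms]
  by (auto intro!: derivative_eq_intros simp: algebra_simps)

lemma LU_eq_nonvanishing:
  assumes "Log_quot f holomorphic_on ball 0 1"
  shows "LU f = {c. \<forall>z\<in>ball 0 1. 1 + c * (z * deriv (Log_quot f) z) \<noteq> 0}"
proof -
  have "deriv (K_op c f) z = exp (c * Log_quot f z) * (1 + c * (z * deriv (Log_quot f) z))"
    if "z \<in> ball 0 1" for c z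
    unfolding K_op_def using has_field_derivative_mult_exp[OF assms _ that]
    by (intro DERIV_imp_deriv) simp
  moreover have "K_op c f holomorphic_on ball 0 1" for c
    unfolding K_op_def using assms by (intro holomorphic_intros)
  ultimately show ?thesis
    by (auto simp: LU_def locally_univalent_def)
qed

lemma quotient_eq_inverse_one_plus:
  assumes hol: "g holomorphic_on S" and "open S" and z: "z \<in> S - {0}"
    and exp_g: "\<And>z. z \<in> S - {0} \<Longrightarrow> exp (g z) = f z / z"
    and df: "(f has_field_derivative deriv f z) (at z)"
  shows "f z / (z * deriv f z) = inverse (1 + z * deriv g z)"
proof -
  have "((\<lambda>z. z * exp (g z)) has_field_derivative exp (g z) * (1 + z * deriv g z)) (at z)"
    using has_field_derivative_mult_exp[OF hol \<open>open S\<close>, of z 1] z by simp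
  then have "(f has_field_derivative exp (g z) * (1 + z * deriv g z)) (at z)"
    by (rule has_field_derivative_transform_within_open[where S = "S - {0}"])
       (use z exp_g \<open>open S\<close> in auto)
  then have "deriv f z = exp (g z) * (1 + z * deriv g z)"
    using df DERIV_unique by blast
  moreover have "f z = z * exp (g z)"
    using exp_g[OF z] z by simp
  ultimately show ?thesis
    using z by (simp add: inverse_eq_divide)
qed

text \<open>A value \<open>1 + w z\<close> close to 0 makes \<open>c = -1 / w z\<close> a point close to 1 with
  \<open>1 + c w z = 0\<close>; conversely \<open>1 + c w = c (1 + w) - (c - 1)\<close>.\<close>

lemma one_in_interior_nonvanishing_iff:
  fixes w :: "'a \<Rightarrow> complex"
  shows "1 \<in> interior {c. \<forall>z\<in>S. 1 + c * w z \<noteq> 0} \<longleftrightarrow> (\<exists>d>0. \<forall>z\<in>S. d \<le> norm (1 + w z))"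
proof
  assume "1 \<in> interior {c. \<forall>z\<in>S. 1 + c * w z \<noteq> 0}"
  then obtain e where "e > 0" and e: "ball 1 e \<subseteq> {c. \<forall>z\<in>S. 1 + c * w z \<noteq> 0}"
    by (meson mem_interior)
  define d where "d = min (1/2) (e/4)"
  have "d \<le> norm (1 + w z)" if "z \<in> S" for z
  proof (rule ccontr)
    assume "\<not> d \<le> norm (1 + w z)"
    then have small: "norm (1 + w z) < d" by simp
    have "1 \<le> norm (1 + w z) + norm (w z)"
      using norm_triangle_ineq4[of "1 + w z" "w z"] by simp
    then have w_large: "1/2 \<le> norm (w z)"
      using small by (simp add: d_def)
    define c where "c = - 1 / w z"
    have "w z \<noteq> 0"
      using w_large by auto
    then have "c - 1 = - (1 + w z) / w z"
      by (simp add: c_def field_simps)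
    then have "norm (c - 1) = norm (1 + w z) / norm (w z)"
      by (metis norm_divide norm_minus_cancel)
    also have "\<dots> \<le> norm (1 + w z) / (1/2)"
      using w_large by (intro divide_left_mono) auto
    also have "\<dots> < e"
      using small \<open>e > 0\<close> by (simp add: d_def)
    finally have "1 + c * w z \<noteq> 0"
      using e that by (auto simp: dist_norm norm_minus_commute)
    moreover have "1 + c * w z = 0"
      using w_large by (auto simp: c_def)
    ultimately show False by simp
  qed
  then show "\<exists>d>0. \<forall>z\<in>S. d \<le> norm (1 + w z)"
    using \<open>e > 0\<close> by (intro exI[of _ d]) (auto simp: d_def)
next
  assume "\<exists>d>0. \<forall>z\<in>S. d \<le> norm (1 + w z)"
  then obtain d where "d > 0" and low: "\<And>z. z \<in> S \<Longrightarrow> d \<le> norm (1 + w z)" by blast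
  define e where "e = min (1/2) (d/4)"
  have "ball 1 e \<subseteq> {c. \<forall>z\<in>S. 1 + c * w z \<noteq> 0}"
  proof safe
    fix c z assume c: "c \<in> ball 1 e" and z: "z \<in> S" and zero: "1 + c * w z = 0"
    have close: "norm (c - 1) < e"
      using c by (simp add: dist_norm norm_minus_commute)
    then have "1/2 \<le> norm c"
      using norm_triangle_ineq2[of 1 "1 - c"] by (simp add: e_def norm_minus_commute)
    then have "d / 2 \<le> norm (c * (1 + w z))"
      using low[OF z] \<open>d > 0\<close> mult_mono[of "1/2" "norm c" d "norm (1 + w z)"]
      by (simp add: norm_mult)
    also have "c * (1 + w z) = (1 + c * w z) + (c - 1)"
      by (simp add: algebra_simps)
    finally have "d / 2 \<le> norm (c - 1)"
      using zero by simp
    then show False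
      using close \<open>d > 0\<close> by (simp add: e_def)
  qed
  then show "1 \<in> interior {c. \<forall>z\<in>S. 1 + c * w z \<noteq> 0}"
    using \<open>d > 0\<close> by (intro interior_maximal[THEN subsetD, of "ball 1 e"]) (auto simp: e_def)
qed

text \<open>Boundedness of \<open>1/h\<close> is only assumed off the point \<open>a\<close>, and \<open>inverse 0 = 0\<close> hides
  zeros of \<open>h\<close>; a zero is excluded because \<open>h\<close> takes small nonzero values around it.\<close>

lemma bounded_inverse_iff_bounded_below:
  assumes hol: "h holomorphic_on S" and "open S" "connected S" "a \<in> S" "h a \<noteq> 0"
  shows "bounded ((\<lambda>z. inverse (h z)) ` (S - {a})) \<longleftrightarrow> (\<exists>d>0. \<forall>z\<in>S. d \<le> norm (h z))"
proof
  assume "bounded ((\<lambda>z. inverse (h z)) ` (S - {a}))"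
  then obtain M where "M > 0" and M: "\<And>z. z \<in> S - {a} \<Longrightarrow> norm (inverse (h z)) \<le> M"
    by (auto simp: bounded_pos)
  have low: "1 / M \<le> norm (h z)" if "z \<in> S - {a}" "h z \<noteq> 0" for z
    using M[OF that(1)] that(2) \<open>M > 0\<close> by (simp add: norm_inverse norm_divide field_simps)
  have nonzero: "h z \<noteq> 0" if z: "z \<in> S" for z
  proof
    assume "h z = 0"
    moreover have "isCont h z"
      using hol \<open>open S\<close> z by (meson holomorphic_on_imp_continuous_on continuous_on_eq_continuous_at)
    ultimately have "eventually (\<lambda>u. norm (h u) < 1 / M) (at z)"
      using \<open>M > 0\<close> by (auto simp: isCont_def tendsto_iff dist_norm)
    moreover have "eventually (\<lambda>u. h u \<noteq> 0 \<and> u \<in> S) (at z)"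
      using non_zero_neighbour_alt[OF hol \<open>open S\<close> \<open>connected S\<close> z \<open>a \<in> S\<close> \<open>h a \<noteq> 0\<close>] .
    moreover have "eventually (\<lambda>u. u \<noteq> a) (at z)"
      by (rule eventually_neq_at_within)
    ultimately have "eventually (\<lambda>u. False) (at z)"
      by eventually_elim (use low in force)
    then show False by (simp add: trivial_limit_at)
  qed
  show "\<exists>d>0. \<forall>z\<in>S. d \<le> norm (h z)"
    using \<open>M > 0\<close> \<open>h a \<noteq> 0\<close> low nonzero
    by (intro exI[of _ "min (1 / M) (norm (h a))"]) (auto simp: min_le_iff_disj)
next
  assume "\<exists>d>0. \<forall>z\<in>S. d \<le> norm (h z)"
  then obtain d where "d > 0" and low: "\<And>z. z \<in> S \<Longrightarrow> d \<le> norm (h z)" by blast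
  have "norm (inverse (h z)) \<le> 1 / d" if "z \<in> S" for z
    using le_imp_inverse_le[OF low[OF that] \<open>d > 0\<close>] by (simp add: norm_divide inverse_eq_divide)
  then show "bounded ((\<lambda>z. inverse (h z)) ` (S - {a}))"
    by (auto simp: bounded_iff)
qed

theorem lemma2p1:
  fixes f :: "complex \<Rightarrow> complex"
  assumes "f holomorphic_on ball 0 1"
    and "f 0 = 0"
    and "deriv f 0 = 1"
    and "\<forall>z. 0 < norm z \<and> norm z < 1 \<longrightarrow> f z \<noteq> 0"
  shows "1 \<in> interior (LU f) \<longleftrightarrow>
         bounded ((\<lambda>z. f z / (z * deriv f z)) ` (ball 0 1 - {0}))"
proof -
  define w where "w z = z * deriv (Log_quot f) z" for z
  have "\<And>z. z \<in> ball 0 1 - {0} \<Longrightarrow> f z \<noteq> 0"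
    using assms(4) by auto
  note log = Log_quot_props[OF assms(1-3) this]
  have "(\<lambda>z. 1 + w z) holomorphic_on ball 0 1"
    unfolding w_def using log(1) by (intro holomorphic_intros holomorphic_deriv) auto
  note bounded_eq = bounded_inverse_iff_bounded_below[OF this, of 0]
  have "(\<lambda>z. f z / (z * deriv f z)) ` (ball 0 1 - {0}) = (\<lambda>z. inverse (1 + w z)) ` (ball 0 1 - {0})"
    using quotient_eq_inverse_one_plus[OF log(1) _ _ log(3)] assms(1)
    by (intro image_cong) (auto simp: w_def holomorphic_derivI)
  then show ?thesis
    using LU_eq_nonvanishing[OF log(1)] one_in_interior_nonvanishing_iff[of "ball 0 1" w] bounded_eq
    by (simp add: w_def)
qed

end
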